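(* Let $A \in \mathbb{R}^{n\times d}$, $b\in\mathbb{R}^n$, and suppose $Ax=b$ admits a solution $x^*$ (not necessarily unique). Let $w$ be a random variable in $\mathbb{R}^n$, $\mathcal{N}(w) = \mathrm{span}\lbrace z \in \mathbb{R}^d : \mathbb{P}[z'A'w=0]=1\rbrace$, $\mathcal{R}(w) = \mathcal{N}(w)^\perp$. Let $\lbrace w_\ell : \ell \geq 0\rbrace$ be random variables in $\mathbb{R}^n$ with $\mathbb{P}[A'w_\ell \in \mathcal{R}(w)] = 1$ for all $\ell$. Let $x_0 \in \mathbb{R}^d$ be arbitrary and $$x_{k+1} = x_k + \frac{A'w_k w_k'(b - Ax_k)}{\|A'w_k\|_2^2}, \quad k \geq 0.$$ Define stopping times $\tau_0 = 0$, $\tau_1 = \min\lbrace k\geq 0 : \mathrm{span}\lbrace A'w_0,\ldots,A'w_k\rbrace = \mathcal{R}(w)\rbrace$, and for $\ell \geq 2$, $\tau_\ell = \min\lbrace k > \tau_{\ell-1} : \mathrm{span}\lbrace A'w_{\tau_{\ell-1}+1},\ldots,A'w_k\rbrace = \mathcal{R}(w)\rbrace$ if $\tau_{\ell-1}<\infty$, and $\tau_\ell = \infty$ otherwise. When the stopping times are finite, let $\mathcal{F}_\ell$ ($\ell\in\mathbb{N}$) be the set of matrices $F$ whose columns form a maximal linearly independent subset of $\lbrace A'w_{\tau_{\ell-1}+1}/\|A'w_{\tau_{\ell-1}+1}\|_2, \ldots, A'w_{\tau_\ell}/\|A'w_{\tau_\ell}\|_2\rbrace$, and $\gamma_\ell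 = 1 - \min_{F\in\mathcal{F}_\ell}\det(F'F)$. Then $\gamma_\ell \in [0,1)$ and, for any $\ell$, on the event $\lbrace\tau_\ell<\infty\rbrace$, $$\|x_{\tau_\ell+1} - x^* - P_{\mathcal{N}(w)}(x_0 - x^* )\|_2^2 \leq \Big(\prod_{j=1}^\ell \gamma_j\Big) \|P_{\mathcal{R}(w)}(x_0 - x^* )\|_2^2.$$ Therefore, for any $k$, $$\|x_k - x^* - P_{\mathcal{N}(w)}(x_0 - x^* )\|_2^2 \leq \Big(\prod_{j=1}^{L(k)} \gamma_j\Big)\|P_{\mathcal{R}(w)}(x_0 - x^* )\|_2^2,$$ where $L(k) = \max\lbrace \ell : k \geq \tau_\ell + 1\rbrace$, on the event $\lbrace \tau_{L(k)} < \infty\rbrace$.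
   Context: $P_W$ denotes the orthogonal projection onto a subspace $W$; $A'$ is the transpose. The iteration presupposes $A'w_k \neq 0$ so that it is defined. *)

theory Defs
  imports "HOL-Probability.Probability"
begin

definition orth_comp :: "'a::real_inner set \<Rightarrow> 'a set" where
  "orth_comp W = {y. \<forall>z\<in>W. y \<bullet> z = 0}"

definition oproj :: "'a::real_inner set \<Rightarrow> 'a \<Rightarrow> 'a" where
  "oproj W v = (THE u. u \<in> W \<and> (\<forall>z\<in>W. (v - u) \<bullet> z = 0))"

definition Nsp :: "'o measure \<Rightarrow> real^'d^'n \<Rightarrow> ('o \<Rightarrow> real^'n) \<Rightarrow> (real^'d) set" where
  "Nsp M A w = span {z. measure M {\<omega> \<in> space M. z \<bullet> (transpose A *v w \<omega>) = 0} = 1}"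

definition Rsp :: "'o measure \<Rightarrow> real^'d^'n \<Rightarrow> ('o \<Rightarrow> real^'n) \<Rightarrow> (real^'d) set" where
  "Rsp M A w = orth_comp (Nsp M A w)"

primrec kacz :: "real^'d^'n \<Rightarrow> real^'n \<Rightarrow> (nat \<Rightarrow> real^'n) \<Rightarrow> real^'d \<Rightarrow> nat \<Rightarrow> real^'d" where
  "kacz A b u x0 0 = x0"
| "kacz A b u x0 (Suc k) = kacz A b u x0 k +
     ((u k \<bullet> (b - A *v kacz A b u x0 k)) / (norm (transpose A *v u k))\<^sup>2) *\<^sub>R (transpose A *v u k)"

text \<open>Stopping times along a realised sequence v (v k = A' w_k), relative to a subspace R.
  tau 0 = 0; tau 1 = min{k \<ge> 0 : span{v 0..v k} = R};
  tau (l+1) = min{k > tau l : span{v (tau l + 1) .. v k} = R} for l \<ge> 1 (\<infinity> if empty or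
  if tau l = \<infinity>).\<close>
primrec tau :: "(nat \<Rightarrow> 'a::real_vector) \<Rightarrow> 'a set \<Rightarrow> nat \<Rightarrow> enat" where
  "tau v R 0 = 0"
| "tau v R (Suc l) =
     (case tau v R l of
        \<infinity> \<Rightarrow> \<infinity>
      | enat t \<Rightarrow>
          (let s = (if l = 0 then 0 else t + 1) in
           if (\<exists>k\<ge>s. span (v ` {s..k}) = R)
           then enat (LEAST k. s \<le> k \<and> span (v ` {s..k}) = R)
           else \<infinity>))"

text \<open>First index of the l-th block (l \<ge> 1): tau (l-1) + 1, with the block for l = 1 starting
  at index 0 (consistent with the definition of tau 1).\<close>
definition block_start :: "(nat \<Rightarrow> 'a::real_vector) \<Rightarrow> 'a set \<Rightarrow> nat \<Rightarrow> nat" where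
  "block_start v R l = (if l \<le> 1 then 0 else the_enat (tau v R (l - 1)) + 1)"

definition block_set :: "(nat \<Rightarrow> 'a::real_normed_vector) \<Rightarrow> 'a set \<Rightarrow> nat \<Rightarrow> 'a set" where
  "block_set v R l = (\<lambda>j. (1 / norm (v j)) *\<^sub>R v j) ` {block_start v R l .. the_enat (tau v R l)}"

text \<open>Column sets of the matrices in F_l: maximal linearly independent subsets.\<close>
definition max_indep_subsets :: "'a::real_vector set \<Rightarrow> 'a set set" where
  "max_indep_subsets S = {B. B \<subseteq> S \<and> independent B \<and>
      (\<forall>T. B \<subseteq> T \<and> T \<subseteq> S \<and> independent T \<longrightarrow> T = B)}"

text \<open>det(F' F) for a matrix F whose set of columns is B: the Leibniz expansion of the
  determinant of the Gram matrix (entries c_i \<bullet> c_j), rows/columns indexed by B.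
  (This is independent of the order of the columns.)\<close>
definition gram_det :: "'a::real_inner set \<Rightarrow> real" where
  "gram_det B = (\<Sum>p\<in>{p. p permutes B}. of_int (sign p) * (\<Prod>c\<in>B. c \<bullet> p c))"

definition gamma :: "(nat \<Rightarrow> 'a::real_inner) \<Rightarrow> 'a set \<Rightarrow> nat \<Rightarrow> real" where
  "gamma v R l = 1 - Min (gram_det ` max_indep_subsets (block_set v R l))"

definition Lk :: "(nat \<Rightarrow> 'a::real_vector) \<Rightarrow> 'a set \<Rightarrow> nat \<Rightarrow> nat" where
  "Lk v R k = (if \<exists>l. tau v R l + 1 \<le> enat k then GREATEST l. tau v R l + 1 \<le> enat k else 0)"

end

theory Submission
  imports Defs
begin

text \<open>Write v k = A' w k. Since A x* = b, the error e k = x k - x* - P_N (x 0 - x*) obeys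
  e (k+1) = e k - (v k \<bullet> e k / |v k|^2) v k: it arises from e 0 = P_R (x 0 - x*) by successive
  orthogonal projections onto the hyperplanes orthogonal to the v k, which never increase the
  norm and, almost surely, keep R invariant. Along one block, whose directions span R, the
  product of these projections contracts R by the factor 1 - det (F' F) for some F in F_l.
  This is proved by adding the normalised directions one at a time: a direction already in the
  span changes nothing, while a new direction at sine s to the span multiplies the Gram
  determinant by s^2 and, by a two-dimensional estimate, the contraction factor accordingly.
  Chaining the blocks gives the bounds.\<close>

section \<open>Gram determinants\<close>

text \<open>Separating the two factors of gram_det lets row operations act on one side at a time.\<close>
definition cross_gram_det :: "('a::real_inner \<Rightarrow> 'a) \<Rightarrow> ('a \<Rightarrow> 'a) \<Rightarrow> 'a set \<Rightarrow> real" where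
  "cross_gram_det x y B = (\<Sum>p\<in>{p. p permutes B}. of_int (sign p) * (\<Prod>c\<in>B. x c \<bullet> y (p c)))"

lemma gram_det_eq_cross_gram_det: "gram_det B = cross_gram_det id id B"
  by (simp add: gram_det_def cross_gram_det_def)

lemma gram_det_empty [simp]: "gram_det {} = 1"
  by (simp add: gram_det_def)

lemma cross_gram_det_commute:
  assumes fin: "finite B"
  shows "cross_gram_det x y B = cross_gram_det y x B"
proof -
  have "of_int (sign (inv p)) * (\<Prod>c\<in>B. x c \<bullet> y (inv p c))
      = of_int (sign p) * (\<Prod>c\<in>B. y c \<bullet> x (p c))" if p: "p permutes B" for p
  proof -
    have "(\<Prod>c\<in>B. x c \<bullet> y (inv p c)) = (\<Prod>c\<in>B. x (p c) \<bullet> y (inv p (p c)))"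
      using prod.reindex_bij_betw[OF permutes_imp_bij[OF p], of "\<lambda>c. x c \<bullet> y (inv p c)"] by simp
    also have "\<dots> = (\<Prod>c\<in>B. y c \<bullet> x (p c))"
      by (simp add: permutes_inverses(2)[OF p] inner_commute)
    finally show ?thesis
      using sign_inverse[OF permutation_permutes[THEN iffD2]] p fin by auto
  qed
  then show ?thesis
    unfolding cross_gram_det_def by (subst sum_permutations_inverse) (auto intro: sum.cong)
qed

lemma cross_gram_det_eq_0_if_repeated_row:
  assumes fin: "finite B" and "c1 \<in> B" "c2 \<in> B" "c1 \<noteq> c2" and eq: "x c1 = x c2"
  shows "cross_gram_det x y B = 0"
proof -
  define t where "t = Transposition.transpose c1 c2"
  define f where "f = (\<lambda>p. of_int (sign p) * (\<Prod>c\<in>B. x c \<bullet> y (p c)))"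
  have t: "t permutes B" unfolding t_def using assms(2,3) by (rule permutes_swap_id)
  have tt: "\<And>c. t (t c) = c" unfolding t_def by (rule transpose_involutory)
  have xt: "\<And>c. x (t c) = x c" unfolding t_def using eq by (auto simp: Transposition.transpose_def)
  have f_swap: "f (p \<circ> t) = - f p" if p: "p permutes B" for p
  proof -
    have "sign (p \<circ> t) = sign p * sign t"
      by (rule sign_compose) (use fin p t permutation_permutes in blast)+
    also have "sign t = -1" unfolding t_def using assms(4) by (simp add: sign_swap_id)
    finally have sign: "sign (p \<circ> t) = - sign p" by (simp add: comp_def)
    have "(\<Prod>c\<in>B. x c \<bullet> y ((p \<circ> t) c)) = (\<Prod>c\<in>B. x (t c) \<bullet> y ((p \<circ> t) (t c)))"
      by (rule prod.reindex_bij_betw[OF permutes_imp_bij[OF t], symmetric])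
    also have "\<dots> = (\<Prod>c\<in>B. x c \<bullet> y (p c))"
      by (simp only: xt tt o_apply)
    finally show ?thesis using sign unfolding f_def by simp
  qed
  have "(\<Sum>p\<in>{p. p permutes B}. f p) = (\<Sum>p\<in>{p. p permutes B}. f (p \<circ> t))"
  proof -
    have "\<And>p. p \<circ> t \<circ> t = p" using tt by (simp add: fun_eq_iff)
    then show ?thesis
      by (intro sum.reindex_bij_witness[where i="\<lambda>p. p \<circ> t" and j="\<lambda>p. p \<circ> t"])
         (auto intro: permutes_compose[OF t])
  qed
  also have "\<dots> = - (\<Sum>p\<in>{p. p permutes B}. f p)"
    by (simp add: f_swap sum_negf)
  finally show ?thesis unfolding cross_gram_det_def f_def[symmetric] by simp
qed

lemma cross_gram_det_fun_upd:
  assumes fin: "finite B" and u: "u \<in> B"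
  shows "cross_gram_det (x(u := a)) y B = a \<bullet> (\<Sum>p\<in>{p. p permutes B}.
            (of_int (sign p) * (\<Prod>c\<in>B-{u}. x c \<bullet> y (p c))) *\<^sub>R y (p u))"
proof -
  have "(\<Prod>c\<in>B. (x(u := a)) c \<bullet> y (p c)) = (a \<bullet> y (p u)) * (\<Prod>c\<in>B-{u}. x c \<bullet> y (p c))" for p
  proof -
    have "(\<Prod>c\<in>B-{u}. (x(u := a)) c \<bullet> y (p c)) = (\<Prod>c\<in>B-{u}. x c \<bullet> y (p c))"
      by (rule prod.cong) auto
    then show ?thesis using prod.remove[OF fin u, of "\<lambda>c. (x(u := a)) c \<bullet> y (p c)"] by simp
  qed
  then show ?thesis
    unfolding cross_gram_det_def inner_sum_right inner_scaleR_right
    by (intro sum.cong) (simp_all add: mult_ac)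
qed

lemma cross_gram_det_row_reduce:
  assumes fin: "finite B" and u: "u \<notin> B" and q: "q \<in> span B"
  shows "cross_gram_det (id(u := u - q)) y (insert u B) = cross_gram_det id y (insert u B)"
proof -
  define W where "W = (\<Sum>p\<in>{p. p permutes insert u B}.
            (of_int (sign p) * (\<Prod>c\<in>insert u B - {u}. id c \<bullet> y (p c))) *\<^sub>R y (p u))"
  have row: "cross_gram_det (id(u := a)) y (insert u B) = a \<bullet> W" for a
    unfolding W_def by (rule cross_gram_det_fun_upd) (use fin in auto)
  have "c \<bullet> W = 0" if "c \<in> B" for c
    using row[of c] cross_gram_det_eq_0_if_repeated_row[of "insert u B" u c "id(u := c)" y] fin u that
    by auto
  then have "q \<bullet> W = 0"
    using orthogonal_to_span[OF q, of W] by (simp add: orthogonal_def inner_commute)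
  moreover have "id(u := u) = id" by auto
  ultimately show ?thesis
    using row[of "u - q"] row[of u] by (simp add: inner_diff_left)
qed

lemma orthogonal_residual:
  fixes u :: "'a::euclidean_space"
  obtains q where "q \<in> span B" "\<And>w. w \<in> span B \<Longrightarrow> (u - q) \<bullet> w = 0"
proof -
  obtain y z where "y \<in> span B" "\<And>w. w \<in> span B \<Longrightarrow> orthogonal z w" "u = y + z"
    using orthogonal_subspace_decomp_exists by blast
  then show ?thesis using that[of y] by (auto simp: orthogonal_def)
qed

lemma cross_gram_det_insert_orthogonal:
  assumes fin: "finite B" and u: "u \<notin> B" and orth: "\<And>c. c \<in> B \<Longrightarrow> f u \<bullet> f c = 0"
  shows "cross_gram_det f f (insert u B) = (f u \<bullet> f u) * cross_gram_det f f B"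
proof -
  let ?g = "\<lambda>p. of_int (sign p) * (\<Prod>c\<in>insert u B. f c \<bullet> f (p c))"
  have moves_u: "?g p = 0" if p: "p permutes insert u B" "\<not> p permutes B" for p
  proof -
    have "p u \<noteq> u"
      using p permutes_superset[OF p(1), of B] by auto
    moreover have "p u \<in> insert u B" using permutes_in_image[OF p(1), of u] by blast
    ultimately have "p u \<in> B" by simp
    then show ?thesis using orth fin by (auto intro!: prod_zero bexI[of _ u])
  qed
  have fixes_u: "?g p = (f u \<bullet> f u) * (of_int (sign p) * (\<Prod>c\<in>B. f c \<bullet> f (p c)))"
    if p: "p permutes B" for p
    using permutes_not_in[OF p u] prod.insert[OF fin u, of "\<lambda>c. f c \<bullet> f (p c)"] by simp
  have "cross_gram_det f f (insert u B) = (\<Sum>p\<in>{p. p permutes B}. ?g p)"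
    unfolding cross_gram_det_def
    by (rule sum.mono_neutral_right) (use fin moves_u in \<open>auto intro: permutes_subset finite_permutations\<close>)
  also have "\<dots> = (f u \<bullet> f u) * cross_gram_det f f B"
    by (simp add: fixes_u cross_gram_det_def sum_distrib_left)
  finally show ?thesis .
qed

lemma gram_det_insert:
  assumes fin: "finite B" and u: "u \<notin> B" and q: "q \<in> span B"
    and orth: "\<And>c. c \<in> B \<Longrightarrow> (u - q) \<bullet> c = 0"
  shows "gram_det (insert u B) = (norm (u - q))\<^sup>2 * gram_det B"
proof -
  define f where "f = id(u := u - q)"
  have "gram_det (insert u B) = cross_gram_det f f (insert u B)"
  proof -
    have "cross_gram_det f f (insert u B) = cross_gram_det id f (insert u B)"
      unfolding f_def by (rule cross_gram_det_row_reduce[OF fin u q])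
    also have "\<dots> = cross_gram_det f id (insert u B)"
      using fin by (rule cross_gram_det_commute[OF finite_insert[THEN iffD2]])
    also have "\<dots> = gram_det (insert u B)"
      unfolding f_def gram_det_eq_cross_gram_det by (rule cross_gram_det_row_reduce[OF fin u q])
    finally show ?thesis by simp
  qed
  also have "\<dots> = (norm (u - q))\<^sup>2 * cross_gram_det f f B"
  proof -
    have "f u \<bullet> f c = 0" if "c \<in> B" for c using that u orth by (auto simp: f_def)
    then show ?thesis
      by (simp add: cross_gram_det_insert_orthogonal[OF fin u] f_def power2_norm_eq_inner)
  qed
  also have "cross_gram_det f f B = gram_det B"
    using u unfolding f_def gram_det_def cross_gram_det_def
    by (intro sum.cong refl arg_cong2[where f="(*)"] prod.cong) (auto dest: permutes_in_image)
  finally show ?thesis .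
qed

lemma gram_det_pos_le_1:
  fixes B :: "'a::euclidean_space set"
  assumes "independent B" and "\<And>b. b \<in> B \<Longrightarrow> norm b = 1"
  shows "0 < gram_det B \<and> gram_det B \<le> 1"
proof -
  have "finite B" using assms(1) by (rule independent_imp_finite)
  then show ?thesis
    using assms
  proof (induction B rule: finite_induct)
    case empty then show ?case by simp
  next
    case (insert u B)
    have indep: "independent B" and u: "u \<notin> span B"
      using insert.prems(1) insert.hyps(2) by (auto simp: independent_insert)
    obtain q where q: "q \<in> span B" and orth: "\<And>w. w \<in> span B \<Longrightarrow> (u - q) \<bullet> w = 0"
      using orthogonal_residual by blast
    have gram: "gram_det (insert u B) = (norm (u - q))\<^sup>2 * gram_det B"
      by (rule gram_det_insert[OF insert.hyps(1,2) q]) (use orth span_base in blast)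
    have "(norm q)\<^sup>2 + (norm (u - q))\<^sup>2 = 1"
      using norm_add_Pythagorean[of q "u - q"] orth[OF q] insert.prems(2)[of u]
      by (simp add: orthogonal_def inner_commute)
    then have "(norm (u - q))\<^sup>2 \<le> 1" using zero_le_power2[of "norm q"] by linarith
    moreover have "0 < (norm (u - q))\<^sup>2" using q u by auto
    moreover have "0 < gram_det B \<and> gram_det B \<le> 1" using insert.IH indep insert.prems(2) by blast
    ultimately show ?case unfolding gram by (simp add: mult_le_one)
  qed
qed

section \<open>Projections onto hyperplanes\<close>

definition proj_perp :: "'a::real_inner \<Rightarrow> 'a \<Rightarrow> 'a" where
  "proj_perp v z = z - ((v \<bullet> z) / (norm v)\<^sup>2) *\<^sub>R v"

fun proj_perp_iter :: "(nat \<Rightarrow> 'a::real_inner) \<Rightarrow> nat \<Rightarrow> nat \<Rightarrow> 'a \<Rightarrow> 'a" where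
  "proj_perp_iter v s 0 z = z"
| "proj_perp_iter v s (Suc n) z = proj_perp (v (s + n)) (proj_perp_iter v s n z)"

lemma proj_perp_sgn: "proj_perp (sgn v) = proj_perp v"
proof (cases "v = 0")
  case False
  then show ?thesis
    by (simp add: fun_eq_iff proj_perp_def sgn_div_norm norm_sgn power2_eq_square divide_inverse_commute)
qed simp

lemma norm_proj_perp_unit:
  assumes "norm u = 1"
  shows "(norm (proj_perp u z))\<^sup>2 = (norm z)\<^sup>2 - (u \<bullet> z)\<^sup>2"
proof -
  have uu: "u \<bullet> u = 1" using assms by (simp add: power2_norm_eq_inner[symmetric])
  have "proj_perp u z = z - (u \<bullet> z) *\<^sub>R u" using assms by (simp add: proj_perp_def)
  then show ?thesis
    unfolding power2_norm_eq_inner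
    by (simp add: inner_diff_left inner_diff_right inner_commute uu power2_eq_square)
qed

lemma norm_proj_perp_le: "norm (proj_perp v z) \<le> norm z"
proof (cases "v = 0")
  case False
  then have "(norm (proj_perp v z))\<^sup>2 = (norm z)\<^sup>2 - (sgn v \<bullet> z)\<^sup>2"
    using norm_proj_perp_unit[of "sgn v" z] by (simp add: proj_perp_sgn norm_sgn)
  then have "(norm (proj_perp v z))\<^sup>2 \<le> (norm z)\<^sup>2" by simp
  then show ?thesis by (rule power2_le_imp_le) simp
qed (simp add: proj_perp_def)

lemma proj_perp_add: "proj_perp v (a + b) = proj_perp v a + proj_perp v b"
  by (simp add: proj_perp_def inner_add_right add_divide_distrib scaleR_add_left)

lemma proj_perp_orthogonal: "v \<bullet> r = 0 \<Longrightarrow> proj_perp v r = r"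
  by (simp add: proj_perp_def)

lemma proj_perp_in_subspace: "subspace S \<Longrightarrow> v \<in> S \<Longrightarrow> z \<in> S \<Longrightarrow> proj_perp v z \<in> S"
  by (simp add: proj_perp_def subspace_diff subspace_scale)

lemma proj_perp_iter_sgn: "proj_perp_iter (\<lambda>j. sgn (v j)) s n = proj_perp_iter v s n"
  by (induction n) (simp_all add: fun_eq_iff proj_perp_sgn)

lemma proj_perp_iter_add_steps:
  "proj_perp_iter v s (m + n) z = proj_perp_iter v (s + m) n (proj_perp_iter v s m z)"
  by (induction n) (simp_all add: add.assoc)

lemma proj_perp_iter_add: "proj_perp_iter v s n (a + b) = proj_perp_iter v s n a + proj_perp_iter v s n b"
  by (induction n) (simp_all add: proj_perp_add)

lemma proj_perp_iter_orthogonal: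
  "(\<And>j. s \<le> j \<Longrightarrow> j < s + n \<Longrightarrow> v j \<bullet> r = 0) \<Longrightarrow> proj_perp_iter v s n r = r"
  by (induction n) (simp_all add: proj_perp_orthogonal)

lemma proj_perp_iter_add_orthogonal:
  assumes "\<And>j. s \<le> j \<Longrightarrow> j < s + n \<Longrightarrow> v j \<in> S" and "\<And>w. w \<in> S \<Longrightarrow> r \<bullet> w = 0"
  shows "proj_perp_iter v s n (a + r) = proj_perp_iter v s n a + r"
proof -
  have "proj_perp_iter v s n r = r"
    using assms by (intro proj_perp_iter_orthogonal) (metis inner_commute)
  then show ?thesis by (simp add: proj_perp_iter_add)
qed

lemma proj_perp_iter_in_subspace:
  "subspace S \<Longrightarrow> (\<And>j. s \<le> j \<Longrightarrow> j < s + n \<Longrightarrow> v j \<in> S) \<Longrightarrow> z \<in> S \<Longrightarrow> proj_perp_iter v s n z \<in> S"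
  by (induction n) (simp_all add: proj_perp_in_subspace)

lemma norm_proj_perp_iter_le: "norm (proj_perp_iter v s n z) \<le> norm z"
  by (induction n) (auto intro: order_trans[OF norm_proj_perp_le])

lemma norm_proj_perp_iter_antimono:
  "m \<le> n \<Longrightarrow> norm (proj_perp_iter v s n z) \<le> norm (proj_perp_iter v s m z)"
  using proj_perp_iter_add_steps[of v s m "n - m" z] norm_proj_perp_iter_le by simp

text \<open>The two-dimensional estimate: c and s are the cosine and sine of the angle between a new
  unit direction and the span of the previous ones, p and b are the components of the iterate
  in and orthogonal to that span, and x + s b is its inner product with the new direction.\<close>
lemma planar_contraction_ineq:
  fixes p x c s a b d :: real
  assumes c: "0 \<le> c" and s: "0 \<le> s" and cs: "c\<^sup>2 + s\<^sup>2 = 1" and x: "\<bar>x\<bar> \<le> c * p"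
    and "0 \<le> p" "0 \<le> a" and p: "p\<^sup>2 \<le> (1 - d) * a\<^sup>2" and "0 \<le> d" "d \<le> 1"
  shows "p\<^sup>2 + b\<^sup>2 - (x + s * b)\<^sup>2 \<le> (1 - d * s\<^sup>2) * (a\<^sup>2 + b\<^sup>2)"
proof -
  define k where "k = sqrt (1 - d)"
  have k: "0 \<le> k" "k \<le> 1" "k\<^sup>2 = 1 - d" using assms(8,9) unfolding k_def by auto
  have "p\<^sup>2 \<le> (k * a)\<^sup>2" using p by (simp only: power_mult_distrib k(3))
  then have pk: "p \<le> k * a" by (rule power2_le_imp_le) (use k(1) \<open>0 \<le> a\<close> in simp)
  show ?thesis
  proof (cases "s * \<bar>b\<bar> \<le> c * p")
    case True
    have "k * a \<le> a" using k(1,2) \<open>0 \<le> a\<close> by (simp add: mult_left_le_one_le)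
    then have "c * p \<le> c * a" using pk c by (intro mult_left_mono) auto
    then have "(s * \<bar>b\<bar>)\<^sup>2 \<le> (c * a)\<^sup>2" using True s by (intro power_mono) auto
    then have sb: "s\<^sup>2 * b\<^sup>2 \<le> c\<^sup>2 * a\<^sup>2" by (simp add: power_mult_distrib)
    have "p\<^sup>2 + b\<^sup>2 - (x + s * b)\<^sup>2 \<le> (1 - d) * a\<^sup>2 + b\<^sup>2"
      using p zero_le_power2[of "x + s * b"] by linarith
    also have "\<dots> = (1 - d * s\<^sup>2) * (a\<^sup>2 + b\<^sup>2) - d * (c\<^sup>2 * a\<^sup>2 - s\<^sup>2 * b\<^sup>2)"
      using cs by algebra
    also have "\<dots> \<le> (1 - d * s\<^sup>2) * (a\<^sup>2 + b\<^sup>2)" using sb \<open>0 \<le> d\<close> by simp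
    finally show ?thesis .
  next
    case False
    define bb where "bb = \<bar>b\<bar>"
    have bb: "0 \<le> bb" "bb\<^sup>2 = b\<^sup>2" unfolding bb_def by simp_all
    have "s * bb - c * p \<le> \<bar>x + s * b\<bar>" using x s unfolding bb_def by (cases "b \<ge> 0") auto
    moreover have "0 \<le> s * bb - c * p" using False unfolding bb_def by simp
    ultimately have "(s * bb - c * p)\<^sup>2 \<le> \<bar>x + s * b\<bar>\<^sup>2" by (rule power_mono)
    then have "(s * bb - c * p)\<^sup>2 \<le> (x + s * b)\<^sup>2" by simp
    then have "p\<^sup>2 + b\<^sup>2 - (x + s * b)\<^sup>2 \<le> p\<^sup>2 + bb\<^sup>2 - (s * bb - c * p)\<^sup>2" using bb by linarith
    also have "\<dots> = (s * p + c * bb)\<^sup>2" using cs by algebra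
    also have "\<dots> \<le> (s * (k * a) + c * bb)\<^sup>2"
      using pk s c bb \<open>0 \<le> p\<close> by (intro power_mono add_right_mono mult_left_mono) auto
    also have "\<dots> \<le> (s\<^sup>2 * k\<^sup>2 + c\<^sup>2) * (a\<^sup>2 + bb\<^sup>2)"
    proof -
      have "(s\<^sup>2 * k\<^sup>2 + c\<^sup>2) * (a\<^sup>2 + bb\<^sup>2) - (s * (k * a) + c * bb)\<^sup>2 = (s * k * bb - c * a)\<^sup>2"
        by algebra
      then show ?thesis using zero_le_power2[of "s * k * bb - c * a"] by linarith
    qed
    also have "\<dots> = (1 - d * s\<^sup>2) * (a\<^sup>2 + b\<^sup>2)" using k(3) cs bb(2) by algebra
    finally show ?thesis .
  qed
qed

lemma norm_proj_perp_extend_bound: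
  fixes q r a b :: "'a::real_inner"
  assumes unit: "norm (q + r) = 1" and orth: "q \<bullet> r = 0" "a \<bullet> r = 0" "b \<bullet> r = 0"
    and contr: "(norm b)\<^sup>2 \<le> (1 - g) * (norm a)\<^sup>2" and "0 \<le> g" "g \<le> 1"
  shows "(norm (proj_perp (q + r) (b + \<mu> *\<^sub>R r)))\<^sup>2 \<le> (1 - g * (norm r)\<^sup>2) * (norm (a + \<mu> *\<^sub>R r))\<^sup>2"
proof -
  have pyth: "(norm (y + \<mu> *\<^sub>R r))\<^sup>2 = (norm y)\<^sup>2 + (\<mu> * norm r)\<^sup>2" if "y \<bullet> r = 0" for y \<mu>
    using that norm_add_Pythagorean[of y "\<mu> *\<^sub>R r"] by (simp add: orthogonal_def power_mult_distrib)
  have "(q + r) \<bullet> (b + \<mu> *\<^sub>R r) = q \<bullet> b + \<mu> * (q \<bullet> r) + r \<bullet> b + \<mu> * (r \<bullet> r)"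
    by (simp add: inner_add_left inner_add_right distrib_left)
  also have "\<dots> = q \<bullet> b + norm r * (\<mu> * norm r)"
    using orth by (simp add: inner_commute power2_norm_eq_inner[symmetric] power2_eq_square)
  finally have inner: "(q + r) \<bullet> (b + \<mu> *\<^sub>R r) = q \<bullet> b + norm r * (\<mu> * norm r)" .
  have "(norm (proj_perp (q + r) (b + \<mu> *\<^sub>R r)))\<^sup>2
      = (norm b)\<^sup>2 + (\<mu> * norm r)\<^sup>2 - (q \<bullet> b + norm r * (\<mu> * norm r))\<^sup>2"
    by (simp only: norm_proj_perp_unit[OF unit] pyth[OF orth(3)] inner)
  also have "\<dots> \<le> (1 - g * (norm r)\<^sup>2) * ((norm a)\<^sup>2 + (\<mu> * norm r)\<^sup>2)"
  proof (rule planar_contraction_ineq[OF norm_ge_zero norm_ge_zero _ _ norm_ge_zero norm_ge_zero contr assms(6,7)])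
    show "(norm q)\<^sup>2 + (norm r)\<^sup>2 = 1" using unit pyth[OF orth(1), of 1] by simp
    show "\<bar>q \<bullet> b\<bar> \<le> norm q * norm b" by (rule Cauchy_Schwarz_ineq2)
  qed
  also have "\<dots> = (1 - g * (norm r)\<^sup>2) * (norm (a + \<mu> *\<^sub>R r))\<^sup>2"
    by (simp only: pyth[OF orth(2)])
  finally show ?thesis .
qed

lemma gram_contraction_insert:
  fixes B :: "'a::euclidean_space set" and T :: "'a \<Rightarrow> 'a"
  assumes indep: "independent B" and unit: "\<And>c. c \<in> insert v B \<Longrightarrow> norm c = 1"
    and new: "v \<notin> span B"
    and T_span: "\<And>a. a \<in> span B \<Longrightarrow> T a \<in> span B"
    and T_orth: "\<And>a r. a \<in> span B \<Longrightarrow> (\<And>w. w \<in> span B \<Longrightarrow> r \<bullet> w = 0) \<Longrightarrow> T (a + r) = T a + r"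
    and contr: "\<And>a. a \<in> span B \<Longrightarrow> (norm (T a))\<^sup>2 \<le> (1 - gram_det B) * (norm a)\<^sup>2"
    and z: "z \<in> span (insert v B)"
  shows "(norm (proj_perp v (T z)))\<^sup>2 \<le> (1 - gram_det (insert v B)) * (norm z)\<^sup>2"
proof -
  obtain q where q: "q \<in> span B" and orth: "\<And>w. w \<in> span B \<Longrightarrow> (v - q) \<bullet> w = 0"
    using orthogonal_residual by blast
  define r where "r = v - q"
  have gram: "gram_det (insert v B) = (norm r)\<^sup>2 * gram_det B"
    unfolding r_def using independent_imp_finite[OF indep] _ q
  proof (rule gram_det_insert)
    show "v \<notin> B" using new span_base by blast
    show "\<And>c. c \<in> B \<Longrightarrow> (v - q) \<bullet> c = 0" using orth span_base by blast
  qed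
  have g: "0 < gram_det B \<and> gram_det B \<le> 1" using indep unit by (intro gram_det_pos_le_1) auto
  obtain \<mu> where "z - \<mu> *\<^sub>R v \<in> span B" using z span_breakdown_eq by blast
  then have a: "z - \<mu> *\<^sub>R v + \<mu> *\<^sub>R q \<in> span B" (is "?a \<in> _") using q by (intro span_add span_mul)
  have z_eq: "z = ?a + \<mu> *\<^sub>R r" by (simp add: r_def algebra_simps)
  have Ta: "T ?a \<in> span B" using a by (rule T_span)
  have "T z = T ?a + \<mu> *\<^sub>R r"
    by (subst z_eq, rule T_orth[OF a]) (simp add: orth r_def)
  then have "(norm (proj_perp v (T z)))\<^sup>2 = (norm (proj_perp (q + r) (T ?a + \<mu> *\<^sub>R r)))\<^sup>2"
    by (simp add: r_def)
  also have "\<dots> \<le> (1 - gram_det B * (norm r)\<^sup>2) * (norm (?a + \<mu> *\<^sub>R r))\<^sup>2"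
  proof (rule norm_proj_perp_extend_bound)
    show "norm (q + r) = 1" using unit by (simp add: r_def)
    show "q \<bullet> r = 0" "?a \<bullet> r = 0" "T ?a \<bullet> r = 0"
      using orth[OF q] orth[OF a] orth[OF Ta] by (simp_all add: r_def inner_commute)
    show "(norm (T ?a))\<^sup>2 \<le> (1 - gram_det B) * (norm ?a)\<^sup>2" by (rule contr[OF a])
  qed (use g in simp_all)
  finally show ?thesis by (simp add: gram mult.commute flip: z_eq)
qed

lemma proj_perp_iter_gram_contraction:
  fixes u :: "nat \<Rightarrow> 'a::euclidean_space"
  assumes unit: "\<And>j. norm (u j) = 1"
  shows "\<exists>B \<subseteq> u ` {s..<s+n}. independent B \<and> span B = span (u ` {s..<s+n}) \<and>
    (\<forall>z\<in>span B. (norm (proj_perp_iter u s n z))\<^sup>2 \<le> (1 - gram_det B) * (norm z)\<^sup>2)"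
proof (induction n)
  case 0
  show ?case by (intro exI[of _ "{}"]) (simp add: independent_empty)
next
  case (Suc n)
  obtain B where B: "B \<subseteq> u ` {s..<s+n}" "independent B" "span B = span (u ` {s..<s+n})"
    and contr: "\<And>z. z \<in> span B \<Longrightarrow> (norm (proj_perp_iter u s n z))\<^sup>2 \<le> (1 - gram_det B) * (norm z)\<^sup>2"
    using Suc.IH by blast
  define v where "v = u (s + n)"
  have "{s..<s + Suc n} = insert (s + n) {s..<s+n}" by auto
  then have block: "u ` {s..<s + Suc n} = insert v (u ` {s..<s+n})" by (simp add: v_def)
  have block_in_span: "u j \<in> span B" if "s \<le> j" "j < s + n" for j
    unfolding B(3) using that by (intro span_base imageI) auto
  show ?case
  proof (cases "v \<in> span B")
    case True
    show ?thesis
    proof (intro exI[of _ B] conjI ballI)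
      show "B \<subseteq> u ` {s..<s + Suc n}" using B(1) block by auto
      show "span B = span (u ` {s..<s + Suc n})"
        using span_redundant[of v "u ` {s..<s+n}"] True B(3) unfolding block by simp
      fix z assume z: "z \<in> span B"
      have "(norm (proj_perp_iter u s (Suc n) z))\<^sup>2 \<le> (norm (proj_perp_iter u s n z))\<^sup>2"
        by (simp add: norm_proj_perp_le power_mono)
      then show "(norm (proj_perp_iter u s (Suc n) z))\<^sup>2 \<le> (1 - gram_det B) * (norm z)\<^sup>2"
        using contr[OF z] by (rule order_trans)
    qed (rule B(2))
  next
    case False
    show ?thesis
    proof (intro exI[of _ "insert v B"] conjI ballI)
      show "insert v B \<subseteq> u ` {s..<s + Suc n}" using B(1) block by auto
      show "independent (insert v B)" using False B(2) by (rule independent_insertI)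
      show "span (insert v B) = span (u ` {s..<s + Suc n})" by (simp only: block span_insert B(3))
      fix z assume "z \<in> span (insert v B)"
      then show "(norm (proj_perp_iter u s (Suc n) z))\<^sup>2 \<le> (1 - gram_det (insert v B)) * (norm z)\<^sup>2"
        unfolding proj_perp_iter.simps v_def[symmetric]
      proof (rule gram_contraction_insert[OF B(2) _ False _ _ contr, rotated -1])
        show "\<And>c. c \<in> insert v B \<Longrightarrow> norm c = 1" using B(1) unit by (auto simp: v_def)
        show "proj_perp_iter u s n a \<in> span B" if "a \<in> span B" for a
          using subspace_span block_in_span that by (rule proj_perp_iter_in_subspace)
        show "proj_perp_iter u s n (a + r) = proj_perp_iter u s n a + r"
          if "\<And>w. w \<in> span B \<Longrightarrow> r \<bullet> w = 0" for a r
          using block_in_span that by (rule proj_perp_iter_add_orthogonal)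
      qed
    qed
  qed
qed

section \<open>Blocks and stopping times\<close>

lemma spanning_independent_in_max_indep_subsets:
  fixes S :: "'a::euclidean_space set"
  assumes "B \<subseteq> S" "independent B" "S \<subseteq> span B"
  shows "B \<in> max_indep_subsets S"
proof -
  have "T = B" if "B \<subseteq> T" "T \<subseteq> S" "independent T" for T
  proof -
    have "finite T \<and> card T \<le> card B"
      using independent_span_bound[OF independent_imp_finite[OF assms(2)] that(3)] that(2) assms(3)
      by blast
    then show ?thesis using that(1) by (metis card_subset_eq finite_subset antisym card_mono)
  qed
  then show ?thesis unfolding max_indep_subsets_def using assms(1,2) by blast
qed

lemma finite_max_indep_subsets: "finite S \<Longrightarrow> finite (max_indep_subsets S)"
  unfolding max_indep_subsets_def by (auto intro: finite_subset[of _ "Pow S"])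

lemma Min_gram_det_max_indep_subsets:
  fixes S :: "'a::euclidean_space set"
  assumes "finite S" and unit: "\<And>b. b \<in> S \<Longrightarrow> norm b = 1"
  shows "0 < Min (gram_det ` max_indep_subsets S) \<and> Min (gram_det ` max_indep_subsets S) \<le> 1"
proof -
  obtain B where "B \<subseteq> S" "independent B" "S \<subseteq> span B"
    using maximal_independent_subset by blast
  then have "max_indep_subsets S \<noteq> {}" using spanning_independent_in_max_indep_subsets by blast
  moreover have "finite (max_indep_subsets S)" using assms(1) by (rule finite_max_indep_subsets)
  ultimately have "Min (gram_det ` max_indep_subsets S) \<in> gram_det ` max_indep_subsets S" by simp
  then obtain B' where "B' \<subseteq> S" "independent B'" "Min (gram_det ` max_indep_subsets S) = gram_det B'"
    unfolding max_indep_subsets_def by auto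
  moreover have "\<And>b. b \<in> B' \<Longrightarrow> norm b = 1" using \<open>B' \<subseteq> S\<close> unit by blast
  ultimately show ?thesis using gram_det_pos_le_1[of B'] by simp
qed

lemma gamma_bounds:
  fixes v :: "nat \<Rightarrow> 'a::euclidean_space"
  assumes "\<And>k. v k \<noteq> 0"
  shows "0 \<le> gamma v R l \<and> gamma v R l < 1"
proof -
  have "finite (block_set v R l)" by (simp add: block_set_def)
  moreover have "norm b = 1" if "b \<in> block_set v R l" for b
    using that assms by (auto simp: block_set_def)
  ultimately show ?thesis
    using Min_gram_det_max_indep_subsets[of "block_set v R l"] unfolding gamma_def by simp
qed

lemma tau_SucD:
  assumes "tau v R (Suc l) = enat t"
  obtains t' where "tau v R l = enat t'" "block_start v R (Suc l) = (if l = 0 then 0 else t' + 1)"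
    "block_start v R (Suc l) \<le> t" "span (v ` {block_start v R (Suc l)..t}) = R"
proof (cases "tau v R l")
  case (enat t')
  define s where "s = (if l = 0 then 0 else t' + 1)"
  have start: "block_start v R (Suc l) = s" unfolding block_start_def s_def using enat by simp
  have "\<exists>k\<ge>s. span (v ` {s..k}) = R"
    using assms enat by (auto simp: s_def Let_def split: if_splits)
  moreover from this have "t = (LEAST k. s \<le> k \<and> span (v ` {s..k}) = R)"
    using assms enat by (simp add: s_def Let_def)
  ultimately have "s \<le> t \<and> span (v ` {s..t}) = R" by (metis (mono_tags, lifting) LeastI_ex)
  then show ?thesis using that enat start s_def by auto
qed (use assms in simp)

lemma tau_le_Suc: "tau v R l = enat t \<Longrightarrow> l \<le> t + 1"
proof (induction l arbitrary: t)
  case (Suc l)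
  then obtain t' where "tau v R l = enat t'" "block_start v R (Suc l) = (if l = 0 then 0 else t' + 1)"
    "block_start v R (Suc l) \<le> t"
    by (elim tau_SucD)
  then show ?case using Suc.IH by (cases "l = 0") fastforce+
qed simp

lemma Lk_0: "Lk v R 0 = 0"
proof -
  have "\<not> tau v R l + 1 \<le> enat 0" for l by (cases "tau v R l") (simp_all add: one_enat_def)
  then show ?thesis by (simp add: Lk_def)
qed

lemma tau_Lk:
  assumes "0 < k"
  obtains t where "tau v R (Lk v R k) = enat t" "t + 1 \<le> k"
proof -
  let ?P = "\<lambda>l. tau v R l + 1 \<le> enat k"
  have P0: "?P 0" using assms by (simp add: one_enat_def)
  have "l \<le> k" if "?P l" for l
    using that tau_le_Suc[of v R l] by (cases "tau v R l") (auto simp: one_enat_def)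
  then have "?P (Greatest ?P)" using GreatestI_nat[of ?P 0 k] P0 by blast
  then have "?P (Lk v R k)" unfolding Lk_def using P0 by auto
  then show ?thesis using that by (cases "tau v R (Lk v R k)") (auto simp: one_enat_def)
qed

context
  fixes v :: "nat \<Rightarrow> 'a::euclidean_space" and R :: "'a set"
  assumes nonzero: "\<And>k. v k \<noteq> 0" and in_R: "\<And>k. v k \<in> R" and subspace_R: "subspace R"
begin

lemma proj_perp_iter_in_R: "z \<in> R \<Longrightarrow> proj_perp_iter v s n z \<in> R"
  using proj_perp_iter_in_subspace[OF subspace_R in_R] .

lemma proj_perp_iter_block_contraction:
  assumes tau: "tau v R (Suc l) = enat t" and z: "z \<in> R"
  shows "(norm (proj_perp_iter v 0 (t + 1) z))\<^sup>2
    \<le> gamma v R (Suc l) * (norm (proj_perp_iter v 0 (block_start v R (Suc l)) z))\<^sup>2"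
proof -
  define s where "s = block_start v R (Suc l)"
  define n where "n = t + 1 - s"
  have "s \<le> t" and span_block: "span (v ` {s..t}) = R"
    using tau_SucD[OF tau] unfolding s_def by metis+
  then have block: "{s..<s+n} = {s..t}" by (auto simp: n_def)
  have sgn_block: "block_set v R (Suc l) = (\<lambda>j. sgn (v j)) ` {s..t}"
    using tau by (simp add: block_set_def s_def sgn_div_norm divide_inverse_commute)
  obtain B where B: "B \<subseteq> (\<lambda>j. sgn (v j)) ` {s..t}" "independent B"
      "span B = span ((\<lambda>j. sgn (v j)) ` {s..t})"
    and contr: "\<And>y. y \<in> span B \<Longrightarrow>
      (norm (proj_perp_iter (\<lambda>j. sgn (v j)) s n y))\<^sup>2 \<le> (1 - gram_det B) * (norm y)\<^sup>2"
    using proj_perp_iter_gram_contraction[of "\<lambda>j. sgn (v j)" s n] nonzero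
    unfolding block by (auto simp: norm_sgn)
  have "span ((\<lambda>x. inverse (norm x) *\<^sub>R x) ` v ` {s..t}) = span (v ` {s..t})"
    by (rule span_image_scale) (use nonzero in auto)
  then have "span ((\<lambda>j. sgn (v j)) ` {s..t}) = span (v ` {s..t})"
    by (simp add: image_image sgn_div_norm)
  then have span_B: "span B = R" using B(3) span_block by simp
  have "(\<lambda>j. sgn (v j)) ` {s..t} \<subseteq> span B" unfolding B(3) by (rule span_superset)
  then have "B \<in> max_indep_subsets (block_set v R (Suc l))"
    unfolding sgn_block using B(1,2) by (intro spanning_independent_in_max_indep_subsets)
  then have "Min (gram_det ` max_indep_subsets (block_set v R (Suc l))) \<le> gram_det B"
    by (intro Min_le finite_imageI finite_max_indep_subsets imageI) (simp_all add: sgn_block)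
  then have "1 - gram_det B \<le> gamma v R (Suc l)" unfolding gamma_def by linarith
  have "proj_perp_iter v 0 (t + 1) z = proj_perp_iter (\<lambda>j. sgn (v j)) s n (proj_perp_iter v 0 s z)"
    using proj_perp_iter_add_steps[of v 0 s n z] \<open>s \<le> t\<close> by (simp add: n_def proj_perp_iter_sgn)
  then have "(norm (proj_perp_iter v 0 (t + 1) z))\<^sup>2 \<le> (1 - gram_det B) * (norm (proj_perp_iter v 0 s z))\<^sup>2"
    using contr proj_perp_iter_in_R[OF z] span_B by simp
  also have "\<dots> \<le> gamma v R (Suc l) * (norm (proj_perp_iter v 0 s z))\<^sup>2"
    using \<open>1 - gram_det B \<le> gamma v R (Suc l)\<close> by (rule mult_right_mono) simp
  finally show ?thesis unfolding s_def .
qed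

lemma proj_perp_iter_tau_contraction:
  "tau v R l = enat t \<Longrightarrow> z \<in> R \<Longrightarrow>
    (norm (proj_perp_iter v 0 (t + 1) z))\<^sup>2 \<le> (\<Prod>j=1..l. gamma v R j) * (norm z)\<^sup>2"
proof (induction l arbitrary: t)
  case 0
  then show ?case using norm_proj_perp_le by (simp add: zero_enat_def power_mono)
next
  case (Suc l)
  obtain t' where t': "tau v R l = enat t'"
    and start: "block_start v R (Suc l) = (if l = 0 then 0 else t' + 1)"
    using tau_SucD[OF Suc.prems(1)] by blast
  have "(norm (proj_perp_iter v 0 (t + 1) z))\<^sup>2
      \<le> gamma v R (Suc l) * (norm (proj_perp_iter v 0 (block_start v R (Suc l)) z))\<^sup>2"
    using Suc.prems by (rule proj_perp_iter_block_contraction)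
  also have "\<dots> \<le> gamma v R (Suc l) * ((\<Prod>j=1..l. gamma v R j) * (norm z)\<^sup>2)"
  proof (rule mult_left_mono)
    show "(norm (proj_perp_iter v 0 (block_start v R (Suc l)) z))\<^sup>2 \<le> (\<Prod>j=1..l. gamma v R j) * (norm z)\<^sup>2"
      using Suc.IH[OF t' Suc.prems(2)] start by (cases "l = 0") simp_all
  qed (use gamma_bounds nonzero in blast)
  also have "\<dots> = (\<Prod>j=1..Suc l. gamma v R j) * (norm z)\<^sup>2"
    by (simp add: prod.nat_ivl_Suc')
  finally show ?case .
qed

lemma proj_perp_iter_Lk_contraction:
  assumes "z \<in> R"
  shows "(norm (proj_perp_iter v 0 k z))\<^sup>2 \<le> (\<Prod>j=1..Lk v R k. gamma v R j) * (norm z)\<^sup>2"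
proof (cases "k = 0")
  case False
  then obtain t where t: "tau v R (Lk v R k) = enat t" "t + 1 \<le> k"
    using tau_Lk[of k v R] by blast
  then have "(norm (proj_perp_iter v 0 k z))\<^sup>2 \<le> (norm (proj_perp_iter v 0 (t + 1) z))\<^sup>2"
    using norm_proj_perp_iter_antimono[OF t(2)] by (simp add: power_mono del: proj_perp_iter.simps)
  also have "\<dots> \<le> (\<Prod>j=1..Lk v R k. gamma v R j) * (norm z)\<^sup>2"
    using t(1) assms by (rule proj_perp_iter_tau_contraction)
  finally show ?thesis .
qed (simp add: Lk_0)

end

section \<open>The iteration\<close>

lemma oproj_unique:
  assumes "subspace W" "u \<in> W" "\<And>z. z \<in> W \<Longrightarrow> (x - u) \<bullet> z = 0"
  shows "oproj W x = u"
  unfolding oproj_def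
proof (rule the_equality)
  show "u \<in> W \<and> (\<forall>z\<in>W. (x - u) \<bullet> z = 0)" using assms by auto
  fix u' assume u': "u' \<in> W \<and> (\<forall>z\<in>W. (x - u') \<bullet> z = 0)"
  then have "u' - u \<in> W" using assms(1,2) by (simp add: subspace_diff)
  then have "(x - u) \<bullet> (u' - u) - (x - u') \<bullet> (u' - u) = 0" using assms(3) u' by simp
  then have "(u' - u) \<bullet> (u' - u) = 0" by (simp add: inner_diff_left inner_diff_right algebra_simps)
  then show "u' = u" by simp
qed

lemma subspace_orth_comp: "subspace (orth_comp W)"
  unfolding subspace_def orth_comp_def by (auto simp: inner_add_left)

lemma oproj_orth_comp_decomp:
  fixes N :: "'a::euclidean_space set"
  assumes "subspace N"
  shows "oproj N x \<in> N" "oproj (orth_comp N) x \<in> orth_comp N"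
    and "x = oproj N x + oproj (orth_comp N) x"
proof -
  obtain y z where y: "y \<in> N" and z: "\<And>n. n \<in> N \<Longrightarrow> z \<bullet> n = 0" and x: "x = y + z"
    using orthogonal_subspace_decomp_exists[of N x]
    unfolding span_eq_iff[THEN iffD2, OF assms] orthogonal_def by blast
  have z_orth: "z \<in> orth_comp N" using z by (simp add: orth_comp_def)
  have "oproj N x = y"
    using assms y by (rule oproj_unique) (simp add: x z)
  moreover have "oproj (orth_comp N) x = z"
    using subspace_orth_comp z_orth
    by (rule oproj_unique) (use y x in \<open>auto simp: orth_comp_def inner_commute\<close>)
  ultimately show "oproj N x \<in> N" "oproj (orth_comp N) x \<in> orth_comp N"
    and "x = oproj N x + oproj (orth_comp N) x"
    using y z_orth x by simp_all
qed

lemma kacz_error_eq_proj_perp_iter: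
  fixes A :: "real^'d^'n"
  assumes "A *v xs = b" and orth: "\<And>k. (transpose A *v u k) \<bullet> y = 0" and "x0 - xs = y + z"
  shows "kacz A b u x0 k - xs - y = proj_perp_iter (\<lambda>k. transpose A *v u k) 0 k z"
proof (induction k)
  case 0
  then show ?case using assms(3) by (simp add: algebra_simps)
next
  case (Suc k)
  let ?x = "kacz A b u x0 k" and ?v = "transpose A *v u k"
  have "u k \<bullet> (b - A *v ?x) = u k \<bullet> (A *v (xs - ?x))"
    by (simp add: assms(1)[symmetric] matrix_vector_mult_diff_distrib)
  also have "\<dots> = ?v \<bullet> (xs - ?x)"
    by (simp add: dot_lmul_matrix)
  also have "\<dots> = - (?v \<bullet> (?x - xs - y))"
    using orth[of k] by (simp add: inner_diff_right)
  finally have step: "u k \<bullet> (b - A *v ?x) = - (?v \<bullet> (?x - xs - y))" .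
  have "kacz A b u x0 (Suc k) - xs - y = proj_perp ?v (?x - xs - y)"
    unfolding kacz.simps step proj_perp_def divide_minus_left scaleR_minus_left
    by (simp add: algebra_simps)
  then show ?case using Suc.IH by simp
qed

lemma kacz_error_eq_proj_perp_iter_oproj:
  fixes A :: "real^'d^'n"
  assumes "A *v xs = b" "subspace N" "\<And>k. transpose A *v u k \<in> orth_comp N"
  shows "kacz A b u x0 k - xs - oproj N (x0 - xs)
    = proj_perp_iter (\<lambda>k. transpose A *v u k) 0 k (oproj (orth_comp N) (x0 - xs))"
  using assms(1) _ oproj_orth_comp_decomp(3)[OF assms(2)]
proof (rule kacz_error_eq_proj_perp_iter)
  show "\<And>k. (transpose A *v u k) \<bullet> oproj N (x0 - xs) = 0"
    using assms(3) oproj_orth_comp_decomp(1)[OF assms(2)] by (simp add: orth_comp_def)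
qed

lemma kacz_block_bounds:
  fixes A :: "real^'d^'n" and u :: "nat \<Rightarrow> real^'n" and N :: "(real^'d) set"
  defines "v \<equiv> \<lambda>k. transpose A *v u k" and "R \<equiv> orth_comp N"
  assumes "A *v xs = b" "subspace N" "\<And>k. v k \<in> R" "\<And>k. v k \<noteq> 0"
  shows "0 \<le> gamma v R l \<and> gamma v R l < 1"
    and "tau v R l = enat t \<Longrightarrow> (norm (kacz A b u x0 (t + 1) - xs - oproj N (x0 - xs)))\<^sup>2
      \<le> (\<Prod>j=1..l. gamma v R j) * (norm (oproj R (x0 - xs)))\<^sup>2"
    and "(norm (kacz A b u x0 k - xs - oproj N (x0 - xs)))\<^sup>2
      \<le> (\<Prod>j=1..Lk v R k. gamma v R j) * (norm (oproj R (x0 - xs)))\<^sup>2"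
proof -
  have R: "subspace R" by (simp add: R_def subspace_orth_comp)
  have z: "oproj R (x0 - xs) \<in> R" unfolding R_def using assms(4) by (rule oproj_orth_comp_decomp)
  have error: "kacz A b u x0 k - xs - oproj N (x0 - xs) = proj_perp_iter v 0 k (oproj R (x0 - xs))" for k
    using assms(3-5) unfolding v_def R_def by (rule kacz_error_eq_proj_perp_iter_oproj)
  show "0 \<le> gamma v R l \<and> gamma v R l < 1" using assms(6) by (rule gamma_bounds)
  show "(norm (kacz A b u x0 (t + 1) - xs - oproj N (x0 - xs)))\<^sup>2
      \<le> (\<Prod>j=1..l. gamma v R j) * (norm (oproj R (x0 - xs)))\<^sup>2" if "tau v R l = enat t"
    unfolding error using assms(6,5) R that z by (rule proj_perp_iter_tau_contraction)
  show "(norm (kacz A b u x0 k - xs - oproj N (x0 - xs)))\<^sup>2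
      \<le> (\<Prod>j=1..Lk v R k. gamma v R j) * (norm (oproj R (x0 - xs)))\<^sup>2"
    unfolding error using assms(6,5) R z by (rule proj_perp_iter_Lk_contraction)
qed

theorem mainTheorem10:
  fixes M :: "'o measure"
    and A :: "real^'d^'n" and b :: "real^'n" and xs x0 :: "real^'d"
    and w :: "'o \<Rightarrow> real^'n" and ws :: "nat \<Rightarrow> 'o \<Rightarrow> real^'n"
  assumes "prob_space M"
    and "A *v xs = b"
    and "w \<in> borel_measurable M"
    and "\<And>l. ws l \<in> borel_measurable M"
    and "\<And>l. measure M {\<omega> \<in> space M. transpose A *v ws l \<omega> \<in> Rsp M A w} = 1"
  shows "AE \<omega> in M.
    (\<forall>k. transpose A *v ws k \<omega> \<noteq> 0) \<longrightarrow>
    (let v = (\<lambda>k. transpose A *v ws k \<omega>); R = Rsp M A w; N = Nsp M A w;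
         x = kacz A b (\<lambda>k. ws k \<omega>) x0 in
      (\<forall>l\<ge>1. tau v R l \<noteq> \<infinity> \<longrightarrow> 0 \<le> gamma v R l \<and> gamma v R l < 1)
    \<and> (\<forall>l t. tau v R l = enat t \<longrightarrow>
          (norm (x (t + 1) - xs - oproj N (x0 - xs)))\<^sup>2
            \<le> (\<Prod>j=1..l. gamma v R j) * (norm (oproj R (x0 - xs)))\<^sup>2)
    \<and> (\<forall>k. tau v R (Lk v R k) \<noteq> \<infinity> \<longrightarrow>
          (norm (x k - xs - oproj N (x0 - xs)))\<^sup>2
            \<le> (\<Prod>j=1..Lk v R k. gamma v R j) * (norm (oproj R (x0 - xs)))\<^sup>2))"
proof -
  interpret prob_space M by (rule assms(1))
  have "AE \<omega> in M. transpose A *v ws k \<omega> \<in> Rsp M A w" for k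
    using AE_prob_1[OF assms(5)[of k]] by eventually_elim simp
  then have "AE \<omega> in M. \<forall>k. transpose A *v ws k \<omega> \<in> Rsp M A w"
    by (simp add: AE_all_countable)
  moreover have "subspace (Nsp M A w)" by (simp add: Nsp_def)
  ultimately show ?thesis
    unfolding Let_def Rsp_def
    by (elim eventually_mono) (intro impI conjI allI; metis kacz_block_bounds[OF assms(2)])
qed

end
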